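(* Let $a\neq 0$, $b$ be integers with $\gcd(a,b)=1$, let $k\ge 1$ be an integer, and let $c_1,e_1\in\mathbb{Q}\setminus\{0\}$, $c_0,e_0\in\mathbb{Q}$. Then there is no integer $m>4$ and no $\delta\in\mathbb{Q}\setminus\{0\}$ such that the polynomial identity $$S_{a,b}^k(c_1x+c_0)=e_1D_m(x,\delta)+e_0$$ holds in $\mathbb{Q}[x]$.
   Context: The Bernoulli polynomials $B_n(x)$ are defined by $\frac{t e^{tx}}{e^t-1}=\sum_{n\ge 0}B_n(x)\frac{t^n}{n!}$. For integers $a\neq 0$, $b$ with $\gcd(a,b)=1$ and an integer $k\ge 1$, define the polynomial $$S_{a,b}^k(x):=\frac{a^k}{k+1}\left(B_{k+1}\!\left(x+\frac{b}{a}\right)-B_{k+1}\!\left(\frac{b}{a}\right)\right)\in\mathbb{Q}[x].$$ For a positive integer $m$ and a number $\delta$, the $m$-th Dickson polynomial with parameter $\delta$ is $$D_m(x,\delta)=\sum_{i=0}^{\lfloor m/2\rfloor}\frac{m}{m-i}\binom{m-i}{i}(-\delta)^i x^{m-2i},$$ equivalently characterized by $D_m(z+\delta/z,\delta)=z^m+(\delta/z)^m$. *)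

theory Defs
  imports "HOL-Computational_Algebra.Polynomial"
begin

text \<open>Bernoulli numbers with the convention t/(e^t - 1) = sum B_n t^n/n!, i.e. B_1 = -1/2,
  given by the recurrence  sum_{j=0}^{n} (n+1 choose j) B_j = 0 for n >= 1, B_0 = 1.\<close>
fun bernoulli_num :: "nat \<Rightarrow> rat" where
  "bernoulli_num n =
     (if n = 0 then 1
      else - (\<Sum>j<n. of_nat ((n + 1) choose j) * (if j < n then bernoulli_num j else 0))
             / of_nat (n + 1))"

definition bernpoly :: "nat \<Rightarrow> rat poly" where
  "bernpoly n = (\<Sum>j\<le>n. monom (of_nat (n choose j) * bernoulli_num j) (n - j))"

definition S_poly :: "int \<Rightarrow> int \<Rightarrow> nat \<Rightarrow> rat poly" where
  "S_poly a b k =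
     smult (of_int a ^ k / of_nat (k + 1))
       (pcompose (bernpoly (k + 1)) [:of_int b / of_int a, 1:]
        - [:poly (bernpoly (k + 1)) (of_int b / of_int a):])"

definition dickson :: "nat \<Rightarrow> rat \<Rightarrow> rat poly" where
  "dickson m \<delta> =
     (\<Sum>i\<le>m div 2. monom (of_nat m / of_nat (m - i) * of_nat ((m - i) choose i) * (- \<delta>) ^ i)
                          (m - 2 * i))"

end

theory Submission imports Defs begin

(* Put n = k + 1, A = a^k/(k+1) and t = b/a + c0.  Then
   S(c1 x + c0) = A (B_n(c1 x + t) - B_n(b/a)), and by the Appell property of the
   Bernoulli polynomials the coefficient of x^(n-r) in B_n(c1 x + t) is
   C(n,r) c1^(n-r) B_r(t).  The Dickson polynomial D_m(x,delta) is monic of degree m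
   with coefficients 0, -m delta and m(m-3)/2 delta^2 at x^(m-1), x^(m-2), x^(m-4). *)

section \<open>Coefficients of shifted Bernoulli polynomials\<close>

lemma pcompose_monom_eq: "pcompose (monom c d) q = smult c (q ^ d)"
  by (induction d) (simp_all add: pcompose_pCons monom_Suc monom_0)

text \<open>Binomial expansion of a power of a linear polynomial, valid for every index.\<close>
lemma coeff_linear_power:
  fixes t s :: "'a :: comm_semiring_1"
  shows "coeff ([:t, s:] ^ d) l = of_nat (d choose l) * s ^ l * t ^ (d - l)"
proof (cases "l \<le> d")
  case True
  then show ?thesis by (rule coeff_linear_poly_power)
next
  case False
  have "degree ([:t, s:] ^ d) \<le> degree [:t, s:] * d"
    by (rule degree_power_le)
  also have "\<dots> \<le> d" by simp
  finally have "degree ([:t, s:] ^ d) \<le> d" .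
  then show ?thesis using False by (simp add: coeff_eq_0 binomial_eq_0)
qed

lemma coeff_bernpoly_pcompose:
  "coeff (pcompose (bernpoly n) [:t, s:]) l =
     (\<Sum>j\<le>n. of_nat (n choose j) * bernoulli_num j * (of_nat ((n - j) choose l) * s ^ l * t ^ (n - j - l)))"
  by (simp add: bernpoly_def pcompose_sum pcompose_monom_eq coeff_sum coeff_linear_power)

lemma poly_bernpoly:
  "poly (bernpoly r) t = (\<Sum>j\<le>r. of_nat (r choose j) * bernoulli_num j * t ^ (r - j))"
  by (simp add: bernpoly_def poly_sum poly_monom)

lemma coeff_bernpoly_pcompose_high:
  assumes "n < l"
  shows "coeff (pcompose (bernpoly n) [:t, s:]) l = 0"
  unfolding coeff_bernpoly_pcompose using assms by (intro sum.neutral) auto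

text \<open>Appell property: the coefficient of x^(n-r) in B_n(s x + t) is
  C(n,r) s^(n-r) B_r(t).  This is what links the top coefficients of S to
  Bernoulli numbers of small index.\<close>
lemma coeff_bernpoly_pcompose_top:
  assumes "r \<le> n"
  shows "coeff (pcompose (bernpoly n) [:t, s:]) (n - r) =
           of_nat (n choose r) * s ^ (n - r) * poly (bernpoly r) t"
proof -
  let ?term = "\<lambda>j. of_nat (n choose j) * bernoulli_num j *
                  (of_nat ((n - j) choose (n - r)) * s ^ (n - r) * t ^ (n - j - (n - r)))"
  have "coeff (pcompose (bernpoly n) [:t, s:]) (n - r) = (\<Sum>j\<le>r. ?term j)"
    unfolding coeff_bernpoly_pcompose
    using assms by (intro sum.mono_neutral_right) (auto simp: binomial_eq_0)
  also have "\<dots> = (\<Sum>j\<le>r. of_nat (n choose r) * s ^ (n - r) *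
                              (of_nat (r choose j) * bernoulli_num j * t ^ (r - j)))"
  proof (rule sum.cong[OF refl])
    fix j assume "j \<in> {..r}"
    then have j: "j \<le> r" by simp
    have "(n - j) choose (n - r) = (n - j) choose (r - j)"
      using binomial_symmetric[of "n - r" "n - j"] j assms by simp
    then have "(n choose j) * ((n - j) choose (n - r)) = (n choose r) * (r choose j)"
      using choose_mult[OF j assms] by simp
    then have "(of_nat (n choose j) :: rat) * of_nat ((n - j) choose (n - r)) =
               of_nat (n choose r) * of_nat (r choose j)"
      by (metis of_nat_mult)
    moreover have "n - j - (n - r) = r - j" using j assms by simp
    ultimately show "?term j = of_nat (n choose r) * s ^ (n - r) *
                                 (of_nat (r choose j) * bernoulli_num j * t ^ (r - j))"
      by (simp add: algebra_simps)
  qed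
  also have "\<dots> = of_nat (n choose r) * s ^ (n - r) * poly (bernpoly r) t"
    by (simp add: poly_bernpoly sum_distrib_left)
  finally show ?thesis .
qed

text \<open>All non-constant coefficients of S_{a,b}^k(c1 x + c0) are A times those of
  B_{k+1}(c1 x + b/a + c0); the constant B_{k+1}(b/a) only affects degree 0.\<close>
lemma coeff_S_poly_pcompose:
  assumes "l \<ge> 1"
  shows "coeff (pcompose (S_poly a b k) [:c0, c1:]) l =
           of_int a ^ k / of_nat (k + 1) *
           coeff (pcompose (bernpoly (k + 1)) [:of_int b / of_int a + c0, c1:]) l"
proof -
  have lin: "pcompose [:of_int b / of_int a, 1:] [:c0, c1:] = [:of_int b / of_int a + c0, c1:]"
    by (simp add: pcompose_pCons)
  have "coeff [:poly (bernpoly (k + 1)) (of_int b / of_int a):] l = 0"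
    using assms by (cases l) simp_all
  then show ?thesis
    unfolding S_poly_def
    by (simp add: pcompose_smult pcompose_diff pcompose_assoc[symmetric] lin)
qed

section \<open>Small Bernoulli numbers and values\<close>

declare bernoulli_num.simps[simp del]

lemma bernoulli_num_0: "bernoulli_num 0 = 1"
  by (simp add: bernoulli_num.simps)

text \<open>The indices are written in successor notation, which is the form produced when
  sums over small ranges are unfolded.\<close>
lemma bernoulli_num_1: "bernoulli_num (Suc 0) = -1/2"
  by (subst bernoulli_num.simps) (simp add: bernoulli_num_0)

lemma bernoulli_num_2: "bernoulli_num (Suc (Suc 0)) = 1/6"
  by (subst bernoulli_num.simps) (simp add: bernoulli_num_0 bernoulli_num_1 lessThan_Suc)

lemma bernoulli_num_3: "bernoulli_num (Suc (Suc (Suc 0))) = 0"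
  by (subst bernoulli_num.simps)
     (simp add: bernoulli_num_0 bernoulli_num_1 bernoulli_num_2 lessThan_Suc)

lemma bernoulli_num_4: "bernoulli_num (Suc (Suc (Suc (Suc 0)))) = -1/30"
  by (subst bernoulli_num.simps)
     (simp add: bernoulli_num_0 bernoulli_num_1 bernoulli_num_2 bernoulli_num_3 lessThan_Suc)

lemmas bernoulli_num_small =
  bernoulli_num_0 bernoulli_num_1 bernoulli_num_2 bernoulli_num_3 bernoulli_num_4

lemma poly_bernpoly_0: "poly (bernpoly 0) t = 1"
  by (simp add: poly_bernpoly bernoulli_num_0)

lemma poly_bernpoly_1: "poly (bernpoly (Suc 0)) t = t - 1/2"
  by (simp add: poly_bernpoly bernoulli_num_small)

lemma poly_bernpoly_2_half: "poly (bernpoly 2) (1/2) = -1/12"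
  by (simp add: poly_bernpoly bernoulli_num_small numeral_eq_Suc atMost_Suc)

lemma poly_bernpoly_4_half: "poly (bernpoly 4) (1/2) = 7/240"
  by (simp add: poly_bernpoly bernoulli_num_small numeral_eq_Suc atMost_Suc)

section \<open>Coefficients of Dickson polynomials\<close>

text \<open>The monomials of D_m have the pairwise distinct degrees m - 2i, so each
  coefficient is either a single summand or zero.\<close>
lemma coeff_dickson:
  "coeff (dickson m \<delta>) l = (\<Sum>i\<le>m div 2. if m - 2 * i = l then
     of_nat m / of_nat (m - i) * of_nat ((m - i) choose i) * (- \<delta>) ^ i else 0)"
  unfolding dickson_def coeff_sum coeff_monom by (rule refl)

lemma coeff_dickson_step:
  assumes "i0 \<le> m div 2"
  shows "coeff (dickson m \<delta>) (m - 2 * i0) =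
           of_nat m / of_nat (m - i0) * of_nat ((m - i0) choose i0) * (- \<delta>) ^ i0"
proof -
  have "coeff (dickson m \<delta>) (m - 2 * i0) = (\<Sum>i\<le>m div 2. if i = i0 then
          of_nat m / of_nat (m - i) * of_nat ((m - i) choose i) * (- \<delta>) ^ i else 0)"
    unfolding coeff_dickson using assms by (intro sum.cong) auto
  then show ?thesis using assms by simp
qed

lemma coeff_dickson_high:
  assumes "m < l"
  shows "coeff (dickson m \<delta>) l = 0"
  unfolding coeff_dickson using assms by (intro sum.neutral) auto

lemma coeff_dickson_lead:
  assumes "m \<ge> 1"
  shows "coeff (dickson m \<delta>) m = 1"
  using coeff_dickson_step[of 0 m \<delta>] assms by simp

lemma coeff_dickson_sub1:
  assumes "m \<ge> 1"
  shows "coeff (dickson m \<delta>) (m - 1) = 0"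
  unfolding coeff_dickson
proof (intro sum.neutral ballI)
  fix i assume "i \<in> {..m div 2}"
  then have "m - 2 * i \<noteq> m - 1" using assms by auto presburger
  then show "(if m - 2 * i = m - 1 then
       of_nat m / of_nat (m - i) * of_nat ((m - i) choose i) * (- \<delta>) ^ i else 0) = 0"
    by simp
qed

lemma of_nat_choose_2: "(of_nat (n choose 2) :: rat) = of_nat n * (of_nat n - 1) / 2"
  by (simp add: binomial_gbinomial gbinomial_prod_rev numeral_eq_Suc atLeast0LessThan lessThan_Suc)

lemma of_nat_choose_4:
  "(of_nat (n choose 4) :: rat) = of_nat n * (of_nat n - 1) * (of_nat n - 2) * (of_nat n - 3) / 24"
  by (simp add: binomial_gbinomial gbinomial_prod_rev numeral_eq_Suc atLeast0LessThan lessThan_Suc)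

lemma coeff_dickson_sub2:
  assumes "m \<ge> 2"
  shows "coeff (dickson m \<delta>) (m - 2) = - (of_nat m * \<delta>)"
proof -
  have "of_nat (m - 1) = (of_nat m - 1 :: rat)" using assms by (simp add: of_nat_diff)
  moreover have "(of_nat m - 1 :: rat) \<noteq> 0" using assms by simp
  ultimately show ?thesis using coeff_dickson_step[of 1 m \<delta>] assms by simp
qed

lemma coeff_dickson_sub4:
  assumes "m \<ge> 4"
  shows "coeff (dickson m \<delta>) (m - 4) = of_nat m * (of_nat m - 3) / 2 * \<delta> ^ 2"
proof -
  have m2: "of_nat (m - 2) = (of_nat m - 2 :: rat)" using assms by (simp add: of_nat_diff)
  have "(of_nat m - 2 :: rat) \<noteq> 0" using assms by simp
  then have "of_nat m / (of_nat m - 2) * ((of_nat m - 2) * (of_nat m - 2 - 1) / 2) * \<delta> ^ 2 =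
               of_nat m * (of_nat m - 3) / 2 * (\<delta> ^ 2 :: rat)"
    by (simp add: field_simps)
  then show ?thesis
    using coeff_dickson_step[of 2 m \<delta>] assms of_nat_choose_2[of "m - 2"] m2 by simp
qed

section \<open>Comparing coefficients\<close>

lemma bernoulli_dickson_degree:
  fixes A s e t \<delta> :: rat
  assumes A: "A \<noteq> 0" and s: "s \<noteq> 0" and e: "e \<noteq> 0" and "n \<ge> 1" and "m \<ge> 1"
    and match: "\<And>l. l \<ge> 1 \<Longrightarrow>
                  A * coeff (pcompose (bernpoly n) [:t, s:]) l = e * coeff (dickson m \<delta>) l"
  shows "m = n \<and> e = A * s ^ n"
proof -
  have lead: "coeff (pcompose (bernpoly n) [:t, s:]) n = s ^ n"
    using coeff_bernpoly_pcompose_top[of 0 n t s] by (simp add: poly_bernpoly_0)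
  have "m = n"
  proof (rule ccontr)
    assume "m \<noteq> n"
    then consider "n < m" | "m < n" by linarith
    then show False
    proof cases
      case 1
      then show False using match[of m] \<open>m \<ge> 1\<close> e
        by (simp add: coeff_bernpoly_pcompose_high coeff_dickson_lead)
    next
      case 2
      then show False using match[of n] \<open>n \<ge> 1\<close> A s
        by (simp add: lead coeff_dickson_high)
    qed
  qed
  moreover have "e = A * s ^ n"
    using match[of n] \<open>n \<ge> 1\<close> \<open>m = n\<close> by (simp add: lead coeff_dickson_lead)
  ultimately show ?thesis by simp
qed

lemma bernoulli_dickson_normalized:
  fixes A s t \<delta> :: rat
  assumes A: "A \<noteq> 0" and s: "s \<noteq> 0" and "r < n"
    and match: "\<And>l. l \<ge> 1 \<Longrightarrow>
          A * coeff (pcompose (bernpoly n) [:t, s:]) l = A * s ^ n * coeff (dickson n \<delta>) l"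
  shows "of_nat (n choose r) * poly (bernpoly r) t = s ^ r * coeff (dickson n \<delta>) (n - r)"
proof -
  have pw: "s ^ n = s ^ (n - r) * s ^ r" using \<open>r < n\<close> by (simp flip: power_add)
  have "A * s ^ (n - r) * (of_nat (n choose r) * poly (bernpoly r) t) =
        A * s ^ (n - r) * (s ^ r * coeff (dickson n \<delta>) (n - r))"
    using match[of "n - r"] \<open>r < n\<close> coeff_bernpoly_pcompose_top[of r n t s]
    by (simp add: pw algebra_simps)
  then show ?thesis using A s by simp
qed

text \<open>The final arithmetic: the relations coming from x^(n-2) and x^(n-4), with
  w = s^2 delta, force 7(n-2) = 5(n-1), i.e. 2n = 9.\<close>
lemma no_integer_solution:
  fixes w :: rat
  assumes "n > 4"
    and sub2: "of_nat (n choose 2) * (-1/12) = w * (- of_nat n)"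
    and sub4: "of_nat (n choose 4) * (7/240) = w ^ 2 * (of_nat n * (of_nat n - 3) / 2)"
  shows False
proof -
  define N :: rat where "N = of_nat n"
  have N: "N > 4" using assms(1) by (simp add: N_def)
  have "N * w = N * ((N - 1) / 24)"
    using sub2 unfolding of_nat_choose_2 N_def[symmetric] by (simp add: field_simps)
  then have w: "w = (N - 1) / 24" using N by simp
  have "N * (N - 1) * (N - 2) * (N - 3) / 24 * (7/240) = w ^ 2 * (N * (N - 3) / 2)"
    using sub4 unfolding of_nat_choose_4 N_def[symmetric] .
  then have "N * (N - 3) * (7 * (N - 1) * (N - 2) / 5760) = N * (N - 3) * (w ^ 2 / 2)"
    by (simp add: field_simps)
  then have "7 * (N - 1) * (N - 2) / 5760 = ((N - 1) / 24) ^ 2 / 2"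
    using N unfolding w by simp
  then have "(N - 1) * (7 * (N - 2)) = (N - 1) * (5 * (N - 1))"
    by (simp add: field_simps power2_eq_square)
  then have "of_nat (2 * n) = (of_nat 9 :: rat)"
    using N by (simp add: N_def)
  then have "2 * n = 9" by (simp only: of_nat_eq_iff)
  then show False by presburger
qed

lemma bernoulli_dickson_mismatch:
  fixes A s t \<delta> :: rat
  assumes A: "A \<noteq> 0" and s: "s \<noteq> 0" and "n > 4"
    and match: "\<And>l. l \<ge> 1 \<Longrightarrow>
          A * coeff (pcompose (bernpoly n) [:t, s:]) l = A * s ^ n * coeff (dickson n \<delta>) l"
  shows False
proof -
  note normalized = bernoulli_dickson_normalized[OF A s _ match]
  have "of_nat n * (t - 1/2) = (0::rat)"
    using normalized[of 1] coeff_dickson_sub1[of n \<delta>] \<open>n > 4\<close> by (simp add: poly_bernpoly_1)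
  then have t: "t = 1/2" using \<open>n > 4\<close> by simp
  have sub2: "of_nat (n choose 2) * (-1/12) = s ^ 2 * \<delta> * (- of_nat n)"
    using normalized[of 2] \<open>n > 4\<close> by (simp add: t poly_bernpoly_2_half coeff_dickson_sub2)
  have "of_nat (n choose 4) * (7/240) = s ^ 4 * (of_nat n * (of_nat n - 3) / 2 * \<delta> ^ 2)"
    using normalized[of 4] \<open>n > 4\<close> by (simp add: t poly_bernpoly_4_half coeff_dickson_sub4)
  then have sub4: "of_nat (n choose 4) * (7/240) =
                     (s ^ 2 * \<delta>) ^ 2 * (of_nat n * (of_nat n - 3) / 2)"
    by (simp add: power_mult_distrib algebra_simps flip: power_mult)
  show False using no_integer_solution[OF \<open>n > 4\<close> sub2 sub4] .
qed

theorem lemma4: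
  fixes a b :: int and k :: nat and c1 c0 e1 e0 :: rat
  assumes "a \<noteq> 0" and "gcd a b = 1" and "k \<ge> 1"
    and "c1 \<noteq> 0" and "e1 \<noteq> 0"
  shows "\<not> (\<exists>(m::nat) (\<delta>::rat). m > 4 \<and> \<delta> \<noteq> 0 \<and>
           pcompose (S_poly a b k) [:c0, c1:] = smult e1 (dickson m \<delta>) + [:e0:])"
proof
  assume "\<exists>(m::nat) (\<delta>::rat). m > 4 \<and> \<delta> \<noteq> 0 \<and>
           pcompose (S_poly a b k) [:c0, c1:] = smult e1 (dickson m \<delta>) + [:e0:]"
  then obtain m \<delta> where "m > 4"
    and eq: "pcompose (S_poly a b k) [:c0, c1:] = smult e1 (dickson m \<delta>) + [:e0:]"
    by blast
  define A :: rat where "A = of_int a ^ k / of_nat (k + 1)"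
  define t :: rat where "t = of_int b / of_int a + c0"
  have A: "A \<noteq> 0" using assms(1) by (simp add: A_def)
  have match: "A * coeff (pcompose (bernpoly (k + 1)) [:t, c1:]) l = e1 * coeff (dickson m \<delta>) l"
    if "l \<ge> 1" for l
  proof -
    have "coeff [:e0:] l = 0" using that by (cases l) simp_all
    then show ?thesis
      using arg_cong[OF eq, of "\<lambda>p. coeff p l"] coeff_S_poly_pcompose[OF that, of a b k c0 c1]
      by (simp add: A_def t_def)
  qed
  have "m = k + 1 \<and> e1 = A * c1 ^ (k + 1)"
    using bernoulli_dickson_degree[OF A assms(4,5) _ _ match] \<open>m > 4\<close> by simp
  then show False
    using bernoulli_dickson_mismatch[OF A assms(4), of "k + 1" t \<delta>] match \<open>m > 4\<close> by simp
qed

end
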